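(* For every $n>6$, if $\Delta,\Delta'\in\mathcal{P}_n$ form a special pair for rule $128$, then $lab_\Delta$ and $lab_{\Delta'}$ differ on exactly one arc among the $2n$ arcs $(i,i+1)$, $(i+1,i)$, $i\in\mathbb{Z}_n$.
   Context: Cells are indexed by $\mathbb{Z}_n=\{0,\dots,n-1\}$, indices modulo $n$. Rule $128$ has local rule $r_{128}(x_1,x_2,x_3)=x_1\wedge x_2\wedge x_3$ and global function $f_{128,n}(x)_i=r_{128}(x_{i-1},x_i,x_{i+1})$. An update schedule is an ordered partition $\Delta=(\Delta_1,\dots,\Delta_k)$ of $\mathbb{Z}_n$ into nonempty blocks; $\mathcal{P}_n$ is the set of them. For a block $B$ let $f^{(B)}(x)_i=f_{128,n}(x)_i$ if $i\in B$ and $x_i$ otherwise; $f^{(\Delta)}_{128,n}=f^{(\Delta_k)}\circ\cdots\circ f^{(\Delta_1)}$. For $u,v\in\mathbb{Z}_n$ with $u\in\Delta_a$, $v\in\Delta_b$, $lab_\Delta((u,v))=\oplus$ if $b\le a$ and $\ominus$ if $a<b$. $\Delta\equiv\Delta'$ iff $lab_\Delta$ and $lab_{\Delta'}$ agree on every arc $(i,i+1)$ and $(i+1,i)$. A pair $\Delta,\Delta'$ is special for rule $128$ if $\Delta\not\equiv\Delta'$ but $f^{(\Delta)}_{128,n}=f^{(\Delta')}_{128,n}$. *)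

theory Defs
  imports Main
begin

text \<open>Cells are the naturals 0..n-1, indices taken modulo n.
  Configurations are functions nat => bool (only the values on 0..n-1 matter).\<close>

definition r128 :: "bool \<Rightarrow> bool \<Rightarrow> bool \<Rightarrow> bool" where
  "r128 x1 x2 x3 = (x1 \<and> x2 \<and> x3)"

definition f128 :: "nat \<Rightarrow> (nat \<Rightarrow> bool) \<Rightarrow> nat \<Rightarrow> bool" where
  "f128 n x i = r128 (x ((i + n - 1) mod n)) (x i) (x ((i + 1) mod n))"

definition is_schedule :: "nat \<Rightarrow> nat set list \<Rightarrow> bool" where
  "is_schedule n D \<longleftrightarrow>
     (\<forall>B\<in>set D. B \<noteq> {}) \<and>
     (\<forall>a<length D. \<forall>b<length D. a \<noteq> b \<longrightarrow> D ! a \<inter> D ! b = {}) \<and>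
     \<Union>(set D) = {0..<n}"

definition block_fun :: "nat \<Rightarrow> nat set \<Rightarrow> (nat \<Rightarrow> bool) \<Rightarrow> nat \<Rightarrow> bool" where
  "block_fun n B x i = (if i \<in> B then f128 n x i else x i)"

fun sched_fun :: "nat \<Rightarrow> nat set list \<Rightarrow> (nat \<Rightarrow> bool) \<Rightarrow> nat \<Rightarrow> bool" where
  "sched_fun n [] = id"
| "sched_fun n (B # Bs) = sched_fun n Bs \<circ> block_fun n B"

definition blk :: "nat set list \<Rightarrow> nat \<Rightarrow> nat" where
  "blk D u = (THE a. a < length D \<and> u \<in> D ! a)"

datatype label = LPlus | LMinus

definition lab :: "nat set list \<Rightarrow> nat \<times> nat \<Rightarrow> label" where
  "lab D e = (if blk D (snd e) \<le> blk D (fst e) then LPlus else LMinus)"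

definition arcs :: "nat \<Rightarrow> (nat \<times> nat) set" where
  "arcs n = {(i, (i + 1) mod n) | i. i < n} \<union> {((i + 1) mod n, i) | i. i < n}"

definition sched_equiv :: "nat \<Rightarrow> nat set list \<Rightarrow> nat set list \<Rightarrow> bool" where
  "sched_equiv n D D' \<longleftrightarrow> (\<forall>e\<in>arcs n. lab D e = lab D' e)"

definition special_pair :: "nat \<Rightarrow> nat set list \<Rightarrow> nat set list \<Rightarrow> bool" where
  "special_pair n D D' \<longleftrightarrow> \<not> sched_equiv n D D' \<and> sched_fun n D = sched_fun n D'"

end

theory Submission
  imports Defs
begin

(* Encode a schedule by its block index c : int => nat, read periodically. Cell i reads the new
   value of its left neighbour iff c (i - 1) < c i, i.e. iff the arc (i - 1, i) is labelled minus;
   a zero therefore travels into i from the left along the maximal run of such arcs, of length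
   left_run c i, and likewise from the right.  Evaluating the global map on the configuration
   with a single zero shows which distances a zero travels into each cell, and this determines
   both run lengths at every cell unless together they cover the whole cycle.
   If now one label differs, say (a - 1, a) is minus only for the first schedule, then the
   second schedule must have a right run of length at least n - 3 starting at a; the first
   must share that run, and the few remaining arcs are pinned down because n > 6. *)

section \<open>Runs of a block index\<close>

definition left_first :: "(int \<Rightarrow> nat) \<Rightarrow> int \<Rightarrow> bool" where
  "left_first c i \<longleftrightarrow> c (i - 1) < c i"

definition right_first :: "(int \<Rightarrow> nat) \<Rightarrow> int \<Rightarrow> bool" where
  "right_first c i \<longleftrightarrow> c (i + 1) < c i"

definition left_run :: "(int \<Rightarrow> nat) \<Rightarrow> int \<Rightarrow> nat" where
  "left_run c i = (LEAST m. \<not> left_first c (i - int m))"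

definition mirror :: "(int \<Rightarrow> nat) \<Rightarrow> int \<Rightarrow> nat" where
  "mirror c i = c (- i)"

definition right_run :: "(int \<Rightarrow> nat) \<Rightarrow> int \<Rightarrow> nat" where
  "right_run c i = left_run (mirror c) (- i)"

definition periodic :: "nat \<Rightarrow> (int \<Rightarrow> nat) \<Rightarrow> bool" where
  "periodic n c \<longleftrightarrow> (\<forall>i. c (i + int n) = c i)"

lemma mirror_mirror [simp]: "mirror (mirror c) = c"
  by (simp add: mirror_def fun_eq_iff)

lemma left_first_mirror: "left_first (mirror c) i \<longleftrightarrow> right_first c (- i)"
  by (simp add: left_first_def right_first_def mirror_def)

lemma left_run_mirror: "left_run (mirror c) i = right_run c (- i)"
  by (simp add: right_run_def)

lemma right_run_mirror: "right_run (mirror c) i = left_run c (- i)"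
  by (simp add: right_run_def)

lemma right_first_imp_not_left_first: "right_first c i \<Longrightarrow> \<not> left_first c (i + 1)"
  by (simp add: left_first_def right_first_def)

lemma left_first_chain_descends:
  "(\<forall>s<m. left_first c (i - int s)) \<Longrightarrow> c (i - int m) + m \<le> c i"
proof (induction m)
  case 0
  then show ?case by simp
next
  case (Suc m)
  then have "c (i - int m) + m \<le> c i" "left_first c (i - int m)"
    by auto
  then show ?case
    by (simp add: left_first_def algebra_simps)
qed

lemma left_run_ge_iff: "m \<le> left_run c i \<longleftrightarrow> (\<forall>s<m. left_first c (i - int s))"
proof -
  have "\<exists>m. \<not> left_first c (i - int m)"
    using left_first_chain_descends[of "Suc (c i)" c i] by auto
  then have "\<not> left_first c (i - int (left_run c i))"
    unfolding left_run_def by (rule LeastI_ex)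
  moreover have "left_first c (i - int s)" if "s < left_run c i" for s
    using that not_less_Least unfolding left_run_def by blast
  ultimately show ?thesis
    by (meson le_less_trans not_le)
qed

lemma left_run_pos_iff: "0 < left_run c i \<longleftrightarrow> left_first c i"
  using left_run_ge_iff[of 1 c i] by auto

lemma left_run_le: "\<not> left_first c (i - int r) \<Longrightarrow> left_run c i \<le> r"
  using left_run_ge_iff[of "Suc r" c i] by auto

lemma left_run_shift:
  assumes "s \<le> left_run c i"
  shows "left_run c (i - int s) = left_run c i - s"
proof -
  have "(\<forall>t<m. left_first c (i - int s - int t)) \<longleftrightarrow> (\<forall>t<m + s. left_first c (i - int t))" for m
  proof
    assume shifted: "\<forall>t<m. left_first c (i - int s - int t)"
    show "\<forall>t<m + s. left_first c (i - int t)"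
    proof (intro allI impI)
      fix t
      assume "t < m + s"
      then show "left_first c (i - int t)"
        using assms left_run_ge_iff[of s c i] shifted[rule_format, of "t - s"]
        by (cases "t < s") (auto simp: of_nat_diff algebra_simps)
    qed
  next
    assume "\<forall>t<m + s. left_first c (i - int t)"
    then show "\<forall>t<m. left_first c (i - int s - int t)"
      by (metis add.commute add_less_mono1 diff_diff_eq of_nat_add)
  qed
  then have le_iff: "m \<le> left_run c (i - int s) \<longleftrightarrow> m + s \<le> left_run c i" for m
    by (simp add: left_run_ge_iff)
  have "left_run c (i - int s) + s \<le> left_run c i"
    using le_iff[of "left_run c (i - int s)"] by simp
  moreover have "left_run c i - s \<le> left_run c (i - int s)"
    using le_iff[of "left_run c i - s"] assms by simp
  ultimately show ?thesis
    by linarith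
qed

lemma periodic_mult:
  assumes "periodic n c"
  shows "c (i + k * int n) = c i"
proof (induction k rule: int_induct[where k = 0])
  case base
  then show ?case by simp
next
  case (step1 k)
  then show ?case
    using assms unfolding periodic_def by (metis add.assoc distrib_right mult_1)
next
  case (step2 k)
  then show ?case
    using assms unfolding periodic_def by (metis diff_add_cancel left_diff_distrib' mult_1 add.assoc)
qed

lemma periodic_cong:
  assumes "periodic n c" "i mod int n = i' mod int n"
  shows "c i = c i'"
proof -
  have "c k = c (k mod int n)" for k
    using periodic_mult[OF assms(1), of "k mod int n" "k div int n"] by (simp add: add.commute)
  then show ?thesis
    using assms(2) by metis
qed

lemma periodic_mirror:
  assumes "periodic n c"
  shows "periodic n (mirror c)"
  unfolding periodic_def mirror_def
proof
  fix i
  have "c (- i - int n + int n) = c (- i - int n)"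
    using assms unfolding periodic_def by blast
  then show "c (- (i + int n)) = c (- i)"
    by simp
qed

lemma left_first_cong:
  "periodic n c \<Longrightarrow> i mod int n = i' mod int n \<Longrightarrow> left_first c i = left_first c i'"
  unfolding left_first_def by (metis periodic_cong mod_diff_left_eq)

lemma right_first_cong:
  "periodic n c \<Longrightarrow> i mod int n = i' mod int n \<Longrightarrow> right_first c i = right_first c i'"
  unfolding right_first_def by (metis periodic_cong mod_add_left_eq)

lemma left_run_less:
  assumes "periodic n c" "0 < n"
  shows "left_run c i < n"
proof (rule ccontr)
  assume "\<not> left_run c i < n"
  then have "c (i - int n) + n \<le> c i"
    using left_run_ge_iff left_first_chain_descends by (metis not_le)
  moreover have "c (i - int n) = c i"
    using assms(1) unfolding periodic_def by (metis diff_add_cancel)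
  ultimately show False
    using assms(2) by simp
qed

lemma right_run_ge_iff: "m \<le> right_run c i \<longleftrightarrow> (\<forall>s<m. right_first c (i + int s))"
  by (simp add: right_run_def left_run_ge_iff left_first_mirror add.commute)

lemma right_run_pos_iff: "0 < right_run c i \<longleftrightarrow> right_first c i"
  by (simp add: right_run_def left_run_pos_iff left_first_mirror)

lemma right_run_le: "\<not> right_first c (i + int r) \<Longrightarrow> right_run c i \<le> r"
  using right_run_ge_iff[of "Suc r" c i] by auto

lemma right_run_shift: "s \<le> right_run c i \<Longrightarrow> right_run c (i + int s) = right_run c i - s"
  using left_run_shift[of s "mirror c" "- i"] by (simp add: right_run_def)

lemma right_run_less: "periodic n c \<Longrightarrow> 0 < n \<Longrightarrow> right_run c i < n"
  by (simp add: right_run_def left_run_less periodic_mirror)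

lemma left_run_zero_in_right_run:
  assumes "0 < s" "s \<le> right_run c i"
  shows "left_run c (i + int s) = 0"
proof -
  have "s - 1 < s"
    using assms(1) by simp
  then have "right_first c (i + int (s - 1))"
    using assms(2) right_run_ge_iff[of s c i] by blast
  then have "\<not> left_first c (i + int s)"
    using assms(1) right_first_imp_not_left_first by fastforce
  then show ?thesis
    by (simp add: left_run_pos_iff[symmetric])
qed

section \<open>Sequential update of rule 128\<close>

lemma blk_mem:
  assumes "is_schedule n D" "i < n"
  shows "blk D i < length D" "i \<in> D ! blk D i"
proof -
  obtain a where a: "a < length D" "i \<in> D ! a"
    using assms unfolding is_schedule_def by (metis UnionE atLeastLessThan_iff in_set_conv_nth zero_le)
  moreover have "b = a" if "b < length D" "i \<in> D ! b" for b
    using assms(1) a that unfolding is_schedule_def by blast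
  ultimately have "\<exists>!a. a < length D \<and> i \<in> D ! a"
    by blast
  then show "blk D i < length D" "i \<in> D ! blk D i"
    unfolding blk_def by (metis (mono_tags, lifting) theI')+
qed

lemma blk_eqI:
  assumes "is_schedule n D" "a < length D" "i \<in> D ! a"
  shows "blk D i = a"
proof -
  have "i < n"
    using assms unfolding is_schedule_def by (metis UnionI atLeastLessThan_iff nth_mem)
  then show ?thesis
    using assms blk_mem[of n D i] unfolding is_schedule_def by blast
qed

lemma sched_fun_append: "sched_fun n (Bs @ [B]) = block_fun n B \<circ> sched_fun n Bs"
  by (induction Bs) auto

lemma sched_fun_take_Suc:
  "t < length D \<Longrightarrow> sched_fun n (take (Suc t) D) x = block_fun n (D ! t) (sched_fun n (take t D) x)"
  by (simp add: take_Suc_conv_app_nth sched_fun_append)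

lemma sched_fun_take_before_blk:
  assumes "is_schedule n D" "i < n" "t \<le> blk D i"
  shows "sched_fun n (take t D) x i = x i"
  using assms(3)
proof (induction t)
  case 0
  then show ?case by simp
next
  case (Suc t)
  then have "t < length D"
    using blk_mem[OF assms(1,2)] by simp
  moreover have "i \<notin> D ! t"
    using blk_eqI[OF assms(1) \<open>t < length D\<close>] Suc.prems by auto
  ultimately show ?case
    using Suc by (simp add: sched_fun_take_Suc block_fun_def)
qed

lemma sched_fun_take_after_blk:
  assumes "is_schedule n D" "i < n" "blk D i < t" "t \<le> length D"
  shows "sched_fun n (take t D) x i = sched_fun n D x i"
  using assms(4)
proof (induction t rule: inc_induct)
  case base
  then show ?case by simp
next
  case (step t)
  then have "i \<notin> D ! t"
    using assms(3) blk_eqI[OF assms(1)] by fastforce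
  then show ?case
    using step by (simp add: sched_fun_take_Suc block_fun_def)
qed

lemma sched_fun_local:
  fixes x :: "nat \<Rightarrow> bool"
  assumes "is_schedule n D" "i < n"
  defines "l \<equiv> (i + n - 1) mod n" and "r \<equiv> (i + 1) mod n" and "y \<equiv> sched_fun n D x"
  shows "y i \<longleftrightarrow> x i \<and> (if blk D l < blk D i then y l else x l)
                      \<and> (if blk D r < blk D i then y r else x r)"
proof -
  define b where "b = blk D i"
  define z where "z = sched_fun n (take b D) x"
  have b: "b < length D" "i \<in> D ! b"
    using blk_mem[OF assms(1,2)] b_def by auto
  have "y i = sched_fun n (take (Suc b) D) x i"
    using sched_fun_take_after_blk[OF assms(1,2)] b y_def b_def by simp
  also have "\<dots> = f128 n z i"
    using b by (simp add: sched_fun_take_Suc block_fun_def z_def)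
  finally have "y i = r128 (z l) (z i) (z r)"
    by (simp add: f128_def l_def r_def)
  moreover have "z k = (if blk D k < blk D i then y k else x k)" if "k < n" for k
    using sched_fun_take_after_blk[OF assms(1) that] sched_fun_take_before_blk[OF assms(1) that]
      b blk_mem[OF assms(1) that] unfolding z_def y_def b_def
    by (metis less_imp_le_nat not_le)
  moreover have "l < n" "r < n"
    using assms(2) by (auto simp: l_def r_def)
  ultimately show ?thesis
    using assms(2) by (auto simp: r128_def)
qed

section \<open>Propagation of a single zero\<close>

definition block_index :: "nat \<Rightarrow> nat set list \<Rightarrow> int \<Rightarrow> nat" where
  "block_index n D k = blk D (nat (k mod int n))"

definition cyclic :: "nat \<Rightarrow> (nat \<Rightarrow> bool) \<Rightarrow> int \<Rightarrow> bool" where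
  "cyclic n x k = x (nat (k mod int n))"

lemma periodic_block_index: "periodic n (block_index n D)"
  by (simp add: periodic_def block_index_def)

lemma nat_mod_pred:
  assumes "0 < n"
  shows "(nat (k mod int n) + n - 1) mod n = nat ((k - 1) mod int n)"
proof -
  have "int ((nat (k mod int n) + n - 1) mod n) = (k mod int n + int n - 1) mod int n"
    using assms by (simp add: zmod_int of_nat_diff)
  also have "\<dots> = (k - 1) mod int n"
    by (metis add.commute add_diff_eq mod_add_self2 mod_diff_left_eq)
  finally show ?thesis
    by (metis nat_int)
qed

lemma nat_mod_succ:
  assumes "0 < n"
  shows "(nat (k mod int n) + 1) mod n = nat ((k + 1) mod int n)"
proof -
  have "int ((nat (k mod int n) + 1) mod n) = (k mod int n + 1) mod int n"
    using assms by (simp add: zmod_int add.commute)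
  also have "\<dots> = (k + 1) mod int n"
    by (simp add: mod_add_left_eq)
  finally show ?thesis
    by (metis nat_int)
qed

lemma mod_pred_int:
  fixes a m :: int
  assumes "0 < m"
  shows "(a - 1) mod m = (if a mod m = 0 then m - 1 else a mod m - 1)"
proof -
  have "(a - 1) mod m = (a mod m - 1) mod m" "0 \<le> a mod m" "a mod m < m"
    using assms by (simp_all add: mod_diff_left_eq)
  then show ?thesis
    using assms by (cases "a mod m = 0") (simp_all add: zmod_minus1 mod_pos_pos_trivial)
qed

lemma mod_succ_int:
  fixes a m :: int
  assumes "0 < m"
  shows "(a + 1) mod m = (if a mod m = m - 1 then 0 else a mod m + 1)"
proof -
  have "(a + 1) mod m = (a mod m + 1) mod m" "0 \<le> a mod m" "a mod m < m"
    using assms by (simp_all add: mod_add_left_eq)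
  then show ?thesis
    using assms by (cases "a mod m = m - 1") (simp_all add: mod_pos_pos_trivial)
qed

lemma sched_fun_cyclic:
  fixes x :: "nat \<Rightarrow> bool"
  assumes "is_schedule n D" "0 < n"
  defines "c \<equiv> block_index n D" and "y \<equiv> cyclic n (sched_fun n D x)"
  shows "y k \<longleftrightarrow> cyclic n x k \<and> (if left_first c k then y (k - 1) else cyclic n x (k - 1))
                             \<and> (if right_first c k then y (k + 1) else cyclic n x (k + 1))"
proof -
  have "nat (k mod int n) < n"
    using assms(2) by (simp add: nat_less_iff)
  then show ?thesis
    using sched_fun_local[OF assms(1), of "nat (k mod int n)" x] nat_mod_pred[OF assms(2), of k]
      nat_mod_succ[OF assms(2), of k]
    by (simp add: c_def y_def cyclic_def block_index_def left_first_def right_first_def)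
qed

lemma sched_fun_zero_iff:
  fixes x :: "nat \<Rightarrow> bool"
  assumes "is_schedule n D" "0 < n"
  defines "c \<equiv> block_index n D" and "z \<equiv> \<lambda>k. \<not> cyclic n (sched_fun n D x) k"
  shows "z k \<longleftrightarrow> (\<not> cyclic n x (k - 1) \<or> \<not> cyclic n x k \<or> \<not> cyclic n x (k + 1))
                   \<or> (left_first c k \<and> z (k - 1)) \<or> (right_first c k \<and> z (k + 1))"
proof -
  have "\<not> cyclic n x i \<Longrightarrow> z i" for i
    using sched_fun_cyclic[OF assms(1,2), of x i] unfolding z_def by blast
  then show ?thesis
    using sched_fun_cyclic[OF assms(1,2), of x k] unfolding z_def c_def by auto
qed

lemma descent_recursion_unique:
  assumes "\<And>k. F k \<longleftrightarrow> B k \<or> (left_first c k \<and> F (k - 1)) \<or> (right_first c k \<and> F (k + 1))"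
    and "\<And>k. G k \<longleftrightarrow> B k \<or> (left_first c k \<and> G (k - 1)) \<or> (right_first c k \<and> G (k + 1))"
  shows "F k \<longleftrightarrow> G k"
proof (induction "c k" arbitrary: k rule: less_induct)
  case less
  have "left_first c k \<Longrightarrow> F (k - 1) = G (k - 1)" "right_first c k \<Longrightarrow> F (k + 1) = G (k + 1)"
    using less by (auto simp: left_first_def right_first_def)
  then show ?case
    using assms[of k] by blast
qed

text \<open>Here (k - j) mod n is the distance from j to k going right; the last cell of a chain reads
  the zero at j directly, whence the + 1.\<close>

definition zero_reaches :: "nat \<Rightarrow> (int \<Rightarrow> nat) \<Rightarrow> int \<Rightarrow> int \<Rightarrow> bool" where
  "zero_reaches n c j k \<longleftrightarrow>
     (k - j) mod int n \<le> int (left_run c k) + 1 \<or> int n \<le> (k - j) mod int n + int (right_run c k) + 1"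

lemma zero_reaches_iff:
  assumes "0 < n"
  shows "zero_reaches n c j k \<longleftrightarrow>
           ((k - 1 - j) mod int n = 0 \<or> (k - j) mod int n = 0 \<or> (k + 1 - j) mod int n = 0)
           \<or> (left_first c k \<and> zero_reaches n c j (k - 1)) \<or> (right_first c k \<and> zero_reaches n c j (k + 1))"
proof -
  define r where "r = (k - j) mod int n"
  have r: "0 \<le> r" "r < int n"
    using assms by (simp_all add: r_def)
  have pred: "(k - 1 - j) mod int n = (if r = 0 then int n - 1 else r - 1)"
    using mod_pred_int[of "int n" "k - j"] assms by (simp add: r_def diff_right_commute)
  have succ: "(k + 1 - j) mod int n = (if r = int n - 1 then 0 else r + 1)"
    using mod_succ_int[of "int n" "k - j"] assms by (simp add: r_def add_diff_eq[symmetric] diff_add_eq)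
  have left: "left_run c (k - 1) = left_run c k - 1" "right_run c (k - 1) = 0" "0 < left_run c k"
    if "left_first c k"
    using that left_run_shift[of 1 c k] right_first_imp_not_left_first[of c "k - 1"]
    by (auto simp: left_run_pos_iff[symmetric] right_run_pos_iff[symmetric] Suc_le_eq)
  have right: "right_run c (k + 1) = right_run c k - 1" "left_run c (k + 1) = 0" "0 < right_run c k"
    if "right_first c k"
    using that right_run_shift[of 1 c k] right_first_imp_not_left_first[of c k]
    by (auto simp: right_run_pos_iff[symmetric] left_run_pos_iff[symmetric] Suc_le_eq)
  consider "r = 0" | "r = 1" | "r = int n - 1" | "2 \<le> r" "r \<le> int n - 2"
    using r by linarith
  then show ?thesis
  proof cases
    case 4
    have "r \<le> int (left_run c k) + 1 \<longleftrightarrow> left_first c k \<and> zero_reaches n c j (k - 1)"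
      using 4 left pred left_run_pos_iff[of c k] unfolding zero_reaches_def r_def[symmetric]
      by (cases "left_first c k") (auto simp: of_nat_diff)
    moreover have "int n \<le> r + int (right_run c k) + 1 \<longleftrightarrow> right_first c k \<and> zero_reaches n c j (k + 1)"
      using 4 right succ right_run_pos_iff[of c k] unfolding zero_reaches_def r_def[symmetric]
      by (cases "right_first c k") (auto simp: of_nat_diff)
    ultimately show ?thesis
      using 4 pred succ unfolding zero_reaches_def r_def[symmetric] by auto
  qed (use pred succ in \<open>auto simp: zero_reaches_def r_def[symmetric]\<close>)
qed

lemma cyclic_single_zero:
  assumes "0 < n"
  shows "cyclic n (\<lambda>u. u \<noteq> nat (j mod int n)) k \<longleftrightarrow> (k - j) mod int n \<noteq> 0"
  using assms by (simp add: cyclic_def eq_nat_nat_iff mod_eq_dvd_iff dvd_eq_mod_eq_0)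

lemma sched_fun_single_zero:
  assumes "is_schedule n D" "0 < n"
  shows "\<not> cyclic n (sched_fun n D (\<lambda>u. u \<noteq> nat (j mod int n))) k
           \<longleftrightarrow> zero_reaches n (block_index n D) j k"
proof -
  let ?x = "\<lambda>u. u \<noteq> nat (j mod int n)"
  have "\<not> cyclic n (sched_fun n D ?x) k \<longleftrightarrow>
          ((k - 1 - j) mod int n = 0 \<or> (k - j) mod int n = 0 \<or> (k + 1 - j) mod int n = 0)
          \<or> (left_first (block_index n D) k \<and> \<not> cyclic n (sched_fun n D ?x) (k - 1))
          \<or> (right_first (block_index n D) k \<and> \<not> cyclic n (sched_fun n D ?x) (k + 1))" for k
    using sched_fun_zero_iff[OF assms, of ?x k] by (simp add: cyclic_single_zero[OF assms(2)])
  then show ?thesis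
    using zero_reaches_iff[OF assms(2)] by (rule descent_recursion_unique)
qed

section \<open>Two schedules with the same global map\<close>

text \<open>A saturated cell is reached by a zero at every distance 1, ..., n - 1, so there the global
  map does not see the run lengths.\<close>

definition saturated :: "nat \<Rightarrow> (int \<Rightarrow> nat) \<Rightarrow> int \<Rightarrow> bool" where
  "saturated n c i \<longleftrightarrow> n \<le> left_run c i + right_run c i + 3"

definition runs_agree :: "nat \<Rightarrow> (int \<Rightarrow> nat) \<Rightarrow> (int \<Rightarrow> nat) \<Rightarrow> bool" where
  "runs_agree n c c' \<longleftrightarrow>
     (\<forall>i. saturated n c i \<and> saturated n c' i
          \<or> left_run c i = left_run c' i \<and> right_run c i = right_run c' i)"

lemma zero_reaches_at_distance:
  "t < n \<Longrightarrow> zero_reaches n c (i - int t) i \<longleftrightarrow> t \<le> left_run c i + 1 \<or> n \<le> t + right_run c i + 1"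
  by (auto simp: zero_reaches_def mod_pos_pos_trivial)

lemma run_lengths_le:
  fixes p q p' q' :: nat
  assumes "\<And>t. 0 < t \<Longrightarrow> t < n \<Longrightarrow> (t \<le> p + 1 \<or> n \<le> t + q + 1) \<longleftrightarrow> (t \<le> p' + 1 \<or> n \<le> t + q' + 1)"
    and "\<not> n \<le> p + q + 3"
  shows "p' \<le> p" "q' \<le> q"
  using assms(1)[of "p + 2"] assms(1)[of "n - q - 2"] assms(2) by auto

lemma run_lengths_determined:
  fixes p q p' q' :: nat
  assumes "\<And>t. 0 < t \<Longrightarrow> t < n \<Longrightarrow> (t \<le> p + 1 \<or> n \<le> t + q + 1) \<longleftrightarrow> (t \<le> p' + 1 \<or> n \<le> t + q' + 1)"
  shows "n \<le> p + q + 3 \<and> n \<le> p' + q' + 3 \<or> p = p' \<and> q = q'"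
proof -
  have sym: "\<And>t. 0 < t \<Longrightarrow> t < n \<Longrightarrow> (t \<le> p' + 1 \<or> n \<le> t + q' + 1) \<longleftrightarrow> (t \<le> p + 1 \<or> n \<le> t + q + 1)"
    using assms by blast
  show ?thesis
    using run_lengths_le[OF assms] run_lengths_le[OF sym] by fastforce
qed

lemma runs_agree_if_sched_fun_eq:
  assumes "is_schedule n D" "is_schedule n D'" "0 < n" "sched_fun n D = sched_fun n D'"
  shows "runs_agree n (block_index n D) (block_index n D')"
  unfolding runs_agree_def saturated_def
proof (intro allI run_lengths_determined)
  fix i and t :: nat
  assume "t < n"
  have "zero_reaches n (block_index n D) (i - int t) i \<longleftrightarrow> zero_reaches n (block_index n D') (i - int t) i"
    using sched_fun_single_zero[OF assms(1,3)] sched_fun_single_zero[OF assms(2,3)] assms(4) by metis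
  then show "(t \<le> left_run (block_index n D) i + 1 \<or> n \<le> t + right_run (block_index n D) i + 1)
         \<longleftrightarrow> (t \<le> left_run (block_index n D') i + 1 \<or> n \<le> t + right_run (block_index n D') i + 1)"
    by (simp only: zero_reaches_at_distance[OF \<open>t < n\<close>])
qed

lemma saturated_mirror: "saturated n (mirror c) i \<longleftrightarrow> saturated n c (- i)"
  by (simp add: saturated_def right_run_mirror right_run_def add.commute)

locale runs_agreement =
  fixes n :: nat and c c' :: "int \<Rightarrow> nat"
  assumes periodic: "periodic n c" "periodic n c'"
    and n_ge_7: "7 \<le> n"
    and runs_agree: "runs_agree n c c'"
begin

lemma swap: "runs_agreement n c' c"
  using periodic n_ge_7 runs_agree unfolding runs_agreement_def runs_agree_def by metis

lemma mirrored: "runs_agreement n (mirror c) (mirror c')"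
  using periodic n_ge_7 runs_agree
  unfolding runs_agreement_def runs_agree_def saturated_mirror
  by (simp add: periodic_mirror right_run_mirror left_run_mirror) (metis minus_minus)

lemma runs_eq_unless_saturated:
  "\<not> saturated n c i \<or> \<not> saturated n c' i \<Longrightarrow> left_run c i = left_run c' i \<and> right_run c i = right_run c' i"
  using runs_agree unfolding runs_agree_def by blast

lemma run_lengths_less: "left_run c i < n" "right_run c i < n" "left_run c' i < n" "right_run c' i < n"
  using periodic n_ge_7 left_run_less right_run_less by auto

context
  fixes a :: int
  assumes up: "left_first c a" and not_up: "\<not> left_first c' a"
begin

lemma right_run'_long: "n \<le> right_run c' a + 3"
proof -
  have "left_run c' a = 0" "0 < left_run c a"
    using up not_up by (simp_all add: left_run_pos_iff[symmetric])
  then have "saturated n c' a"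
    using runs_eq_unless_saturated[of a] by (metis less_irrefl)
  then show ?thesis
    using \<open>left_run c' a = 0\<close> by (simp add: saturated_def)
qed

lemma runs'_after:
  assumes "s \<le> right_run c' a"
  shows "right_run c' (a + int s) = right_run c' a - s" "left_run c' (a + int s) = 0"
proof -
  show "right_run c' (a + int s) = right_run c' a - s"
    using assms by (rule right_run_shift)
  show "left_run c' (a + int s) = 0"
    using assms not_up left_run_zero_in_right_run[of s c' a] by (cases "s = 0") (auto simp: left_run_pos_iff[symmetric])
qed

lemma runs_after:
  assumes "3 \<le> s" "s \<le> right_run c' a"
  shows "right_run c (a + int s) = right_run c' a - s" "left_run c (a + int s) = 0"
proof -
  have "\<not> saturated n c' (a + int s)"
    using assms runs'_after[OF assms(2)] run_lengths_less(4)[of a] by (simp add: saturated_def)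
  then show "right_run c (a + int s) = right_run c' a - s" "left_run c (a + int s) = 0"
    using runs_eq_unless_saturated runs'_after[OF assms(2)] by auto
qed

lemma left_run_le_complement: "left_run c a \<le> n - right_run c' a"
proof (rule left_run_le)
  let ?Y = "right_run c' a"
  have "4 \<le> ?Y"
    using right_run'_long n_ge_7 by simp
  then have "0 < right_run c (a + int (?Y - 1))"
    using runs_after[of "?Y - 1"] by simp
  then have "\<not> left_first c (a + int (?Y - 1) + 1)"
    by (simp add: right_run_pos_iff right_first_imp_not_left_first)
  moreover have "(a + int (?Y - 1) + 1) mod int n = (a - int (n - ?Y)) mod int n"
    using \<open>4 \<le> ?Y\<close> run_lengths_less(4)[of a] by (simp add: of_nat_diff mod_eq_dvd_iff)
  ultimately show "\<not> left_first c (a - int (n - ?Y))"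
    using left_first_cong[OF periodic(1)] by metis
qed

lemma right_run_eq: "right_run c a = right_run c' a"
proof -
  let ?Y = "right_run c' a" and ?q = "right_run c a"
  have "4 \<le> ?Y"
    using right_run'_long n_ge_7 by simp
  show ?thesis
  proof (cases "3 \<le> ?q")
    case True
    then show ?thesis
      using right_run_shift[of 3 c a] runs_after[of 3] \<open>4 \<le> ?Y\<close> by simp
  next
    case False
    have "right_run c (a + int ?q) = 0" "right_run c' (a + int ?q) = ?Y - ?q"
      using right_run_shift[of ?q c a] runs'_after(1)[of ?q] False \<open>4 \<le> ?Y\<close> by simp_all
    moreover have "left_run c' (a + int ?q) = 0"
      using runs'_after(2)[of ?q] False \<open>4 \<le> ?Y\<close> by simp
    ultimately have "saturated n c' (a + int ?q)"
      using runs_eq_unless_saturated[of "a + int ?q"] False \<open>4 \<le> ?Y\<close> by auto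
    then have "n \<le> ?Y - ?q + 3"
      using \<open>right_run c' (a + int ?q) = ?Y - ?q\<close> \<open>left_run c' (a + int ?q) = 0\<close>
      by (simp add: saturated_def)
    moreover have "n \<le> left_run c a + ?q + 3"
      using runs_eq_unless_saturated[of a] not_up up
      by (auto simp: saturated_def left_run_pos_iff[symmetric])
    ultimately show ?thesis
      using left_run_le_complement n_ge_7 run_lengths_less(4)[of a] by linarith
  qed
qed

lemma flags_agree_on_run:
  assumes "s \<le> right_run c' a"
  shows "right_first c (a + int s) \<longleftrightarrow> right_first c' (a + int s)"
    and "0 < s \<Longrightarrow> left_first c (a + int s) \<longleftrightarrow> left_first c' (a + int s)"
proof -
  have "right_run c (a + int s) = right_run c' (a + int s)"
    using assms right_run_eq right_run_shift[of s c a] runs'_after(1) by simp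
  then show "right_first c (a + int s) \<longleftrightarrow> right_first c' (a + int s)"
    by (simp add: right_run_pos_iff[symmetric])
  assume "0 < s"
  then have "left_run c (a + int s) = left_run c' (a + int s)"
    using assms right_run_eq left_run_zero_in_right_run[of s c a] runs'_after(2) by simp
  then show "left_first c (a + int s) \<longleftrightarrow> left_first c' (a + int s)"
    by (simp add: left_run_pos_iff[symmetric])
qed

text \<open>The cell k = a + s - n lies just before a. In c its right run stops at a - 1, as the arc
  into a is minus, and its left run stops at a + right_run c' a - n, where the shared run ends;
  so c is not saturated at k.\<close>

lemma flags_agree_off_run:
  assumes "right_run c' a < s" "s < n"
  shows "right_first c (a + int s) \<longleftrightarrow> right_first c' (a + int s)"
    and "left_first c (a + int s) \<longleftrightarrow> left_first c' (a + int s)"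
proof -
  let ?Y = "right_run c' a" and ?k = "a + int s - int n"
  have "4 \<le> ?Y"
    using right_run'_long n_ge_7 by simp
  have "\<not> right_first c (?k + int (n - s - 1))"
    using up right_first_imp_not_left_first[of c "a - 1"] assms by (auto simp: of_nat_diff)
  then have "right_run c ?k \<le> n - s - 1"
    by (rule right_run_le)
  have "left_run c (a + int ?Y) = 0"
    using runs_after(2)[of ?Y] \<open>4 \<le> ?Y\<close> by simp
  then have "\<not> left_first c (?k - int (s - ?Y))"
    using left_first_cong[OF periodic(1), of "a + int ?Y" "?k - int (s - ?Y)"] assms
    by (simp add: left_run_pos_iff[symmetric] of_nat_diff mod_eq_dvd_iff)
  then have "left_run c ?k \<le> s - ?Y"
    by (rule left_run_le)
  then have "\<not> saturated n c ?k"
    using \<open>right_run c ?k \<le> n - s - 1\<close> assms right_run'_long n_ge_7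
    by (simp add: saturated_def)
  then have "right_first c ?k \<longleftrightarrow> right_first c' ?k" "left_first c ?k \<longleftrightarrow> left_first c' ?k"
    using runs_eq_unless_saturated[of ?k] by (simp_all add: right_run_pos_iff[symmetric] left_run_pos_iff[symmetric])
  moreover have "?k mod int n = (a + int s) mod int n"
    by (simp add: mod_eq_dvd_iff)
  ultimately show "right_first c (a + int s) \<longleftrightarrow> right_first c' (a + int s)"
    and "left_first c (a + int s) \<longleftrightarrow> left_first c' (a + int s)"
    using right_first_cong[OF periodic(1)] right_first_cong[OF periodic(2)]
      left_first_cong[OF periodic(1)] left_first_cong[OF periodic(2)] by metis+
qed

lemma flags_agree_except_at:
  shows "right_first c b \<longleftrightarrow> right_first c' b"
    and "b mod int n \<noteq> a mod int n \<Longrightarrow> left_first c b \<longleftrightarrow> left_first c' b"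
proof -
  define s where "s = nat ((b - a) mod int n)"
  have "s < n" "(a + int s) mod int n = b mod int n"
    using n_ge_7 by (simp_all add: s_def nat_less_iff mod_add_right_eq)
  then have flags: "right_first c b = right_first c (a + int s)" "right_first c' b = right_first c' (a + int s)"
      "left_first c b = left_first c (a + int s)" "left_first c' b = left_first c' (a + int s)"
    using right_first_cong[OF periodic(1)] right_first_cong[OF periodic(2)]
      left_first_cong[OF periodic(1)] left_first_cong[OF periodic(2)] by metis+
  show "right_first c b \<longleftrightarrow> right_first c' b"
    using flags flags_agree_on_run(1)[of s] flags_agree_off_run(1)[of s] \<open>s < n\<close> by (cases "s \<le> right_run c' a") auto
  assume "b mod int n \<noteq> a mod int n"
  then have "0 < s"
    using \<open>(a + int s) mod int n = b mod int n\<close> by (cases s) auto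
  then show "left_first c b \<longleftrightarrow> left_first c' b"
    using flags flags_agree_on_run(2)[of s] flags_agree_off_run(2)[of s] \<open>s < n\<close> by (cases "s \<le> right_run c' a") auto
qed

end

lemma left_first_disagreement:
  assumes "left_first c a \<noteq> left_first c' a"
  shows "right_first c b \<longleftrightarrow> right_first c' b"
    and "b mod int n \<noteq> a mod int n \<Longrightarrow> left_first c b \<longleftrightarrow> left_first c' b"
proof -
  have "(right_first c b \<longleftrightarrow> right_first c' b)
        \<and> (b mod int n \<noteq> a mod int n \<longrightarrow> (left_first c b \<longleftrightarrow> left_first c' b))"
  proof (cases "left_first c a")
    case True
    then show ?thesis
      using assms flags_agree_except_at[of a b] by simp
  next
    case False
    then show ?thesis
      using assms runs_agreement.flags_agree_except_at[OF swap, of a b] by simp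
  qed
  then show "right_first c b \<longleftrightarrow> right_first c' b"
    and "b mod int n \<noteq> a mod int n \<Longrightarrow> left_first c b \<longleftrightarrow> left_first c' b"
    by simp_all
qed

lemma right_first_disagreement:
  assumes "right_first c a \<noteq> right_first c' a"
  shows "left_first c b \<longleftrightarrow> left_first c' b"
    and "b mod int n \<noteq> a mod int n \<Longrightarrow> right_first c b \<longleftrightarrow> right_first c' b"
proof -
  show "left_first c b \<longleftrightarrow> left_first c' b"
  proof (rule ccontr)
    assume "left_first c b \<noteq> left_first c' b"
    then have "right_first c a \<longleftrightarrow> right_first c' a"
      by (rule left_first_disagreement(1))
    with assms show False
      by simp
  qed
  assume "b mod int n \<noteq> a mod int n"
  then have "(- b) mod int n \<noteq> (- a) mod int n"
    by (metis minus_minus mod_minus_cong)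
  then show "right_first c b \<longleftrightarrow> right_first c' b"
    using runs_agreement.left_first_disagreement(2)[OF mirrored, of "- a" "- b"] assms
    by (simp add: left_first_mirror)
qed

end

section \<open>Labels\<close>

lemma lab_forward:
  assumes "i < n"
  shows "lab D (i, (i + 1) mod n) = (if left_first (block_index n D) (int i + 1) then LMinus else LPlus)"
proof -
  have "(int i + 1) mod int n = int ((i + 1) mod n)"
    by (simp add: zmod_int add.commute)
  then show ?thesis
    using assms by (auto simp: lab_def left_first_def block_index_def mod_pos_pos_trivial)
qed

lemma lab_backward:
  assumes "i < n"
  shows "lab D ((i + 1) mod n, i) = (if right_first (block_index n D) (int i) then LMinus else LPlus)"
proof -
  have "(int i + 1) mod int n = int ((i + 1) mod n)"
    by (simp add: zmod_int add.commute)
  then show ?thesis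
    using assms by (auto simp: lab_def right_first_def block_index_def mod_pos_pos_trivial)
qed

lemma label_disagreement_cases:
  assumes "e \<in> arcs n" "lab D e \<noteq> lab D' e"
  obtains i where "i < n" "e = (i, (i + 1) mod n)"
      "left_first (block_index n D) (int i + 1) \<noteq> left_first (block_index n D') (int i + 1)"
    | i where "i < n" "e = ((i + 1) mod n, i)"
      "right_first (block_index n D) (int i) \<noteq> right_first (block_index n D') (int i)"
  using assms lab_forward[of _ n D] lab_forward[of _ n D'] lab_backward[of _ n D] lab_backward[of _ n D']
  unfolding arcs_def by (auto split: if_splits)

lemma label_disagreement_unique:
  assumes "runs_agreement n (block_index n D) (block_index n D')"
    and "e \<in> arcs n" "lab D e \<noteq> lab D' e" "e' \<in> arcs n" "lab D e' \<noteq> lab D' e'"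
  shows "e = e'"
proof -
  interpret runs_agreement n "block_index n D" "block_index n D'"
    by (rule assms(1))
  have same_mod: "int i mod int n = int i' mod int n \<Longrightarrow> i < n \<Longrightarrow> i' < n \<Longrightarrow> i = i'" for i i'
    by (simp add: mod_pos_pos_trivial)
  show ?thesis
    using assms(2,3)
  proof (cases rule: label_disagreement_cases)
    case (1 i)
    note fwd = this
    show ?thesis
      using assms(4,5)
    proof (cases rule: label_disagreement_cases)
      case (1 i')
      then have "(int i' + 1) mod int n = (int i + 1) mod int n"
        using left_first_disagreement(2)[OF fwd(3)] by blast
      then have "int i' mod int n = int i mod int n"
        by (simp add: mod_eq_dvd_iff)
      then show ?thesis
        using fwd 1 same_mod by simp
    next
      case (2 i')
      then show ?thesis
        using left_first_disagreement(1)[OF fwd(3)] by blast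
    qed
  next
    case (2 i)
    note bwd = this
    show ?thesis
      using assms(4,5)
    proof (cases rule: label_disagreement_cases)
      case (1 i')
      then show ?thesis
        using right_first_disagreement(1)[OF bwd(3)] by blast
    next
      case (2 i')
      then have "int i mod int n = int i' mod int n"
        using right_first_disagreement(2)[OF bwd(3)] by metis
      then show ?thesis
        using bwd 2 same_mod by simp
    qed
  qed
qed

theorem mainTheorem18:
  fixes n :: nat and D D' :: "nat set list"
  assumes "n > 6"
    and "is_schedule n D" and "is_schedule n D'"
    and "special_pair n D D'"
  shows "card {e \<in> arcs n. lab D e \<noteq> lab D' e} = 1"
proof -
  have "sched_fun n D = sched_fun n D'" and "\<not> sched_equiv n D D'"
    using assms(4) unfolding special_pair_def by auto
  then obtain e where e: "e \<in> arcs n" "lab D e \<noteq> lab D' e"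
    unfolding sched_equiv_def by blast
  have "runs_agreement n (block_index n D) (block_index n D')"
    using runs_agree_if_sched_fun_eq[OF assms(2,3) _ \<open>sched_fun n D = sched_fun n D'\<close>] assms(1)
    by (simp add: runs_agreement_def periodic_block_index)
  then have "{e \<in> arcs n. lab D e \<noteq> lab D' e} = {e}"
    using label_disagreement_unique e by blast
  then show ?thesis
    by simp
qed

end
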